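(* Let $G=(V,E)$ be a finite connected graph with $n$ vertices and maximal degree $\Delta$. Then $\mathcal{AC}(G) \leq 20\,\Delta\, n$.
   Context: Acquaintance time: Let $G=(V,E)$ be a finite connected graph. Initially one agent is placed on each vertex. At any moment, two agents located at the endpoints of a common edge become acquainted (in particular, agents on adjacent vertices at the start are acquainted). In each round one chooses a matching of $G$ (not necessarily maximal), and for every edge of the matching the two agents on its endpoints swap places; after each round, all pairs of agents on adjacent vertices become acquainted. A sequence of matchings after which every pair of agents has been acquainted is a strategy for acquaintance in $G$. The acquaintance time $\mathcal{AC}(G)$ is the minimal number of rounds in a strategy for acquaintance in $G$. *)

theory Defs
  imports Main
begin

definition fin_graph :: "'a set \<Rightarrow> ('a \<Rightarrow> 'a \<Rightarrow> bool) \<Rightarrow> bool" where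
  "fin_graph V E \<longleftrightarrow> finite V \<and> V \<noteq> {} \<and>
     (\<forall>u v. E u v \<longrightarrow> u \<in> V \<and> v \<in> V) \<and>
     (\<forall>u v. E u v \<longrightarrow> E v u) \<and> (\<forall>u. \<not> E u u)"

definition connected_graph :: "'a set \<Rightarrow> ('a \<Rightarrow> 'a \<Rightarrow> bool) \<Rightarrow> bool" where
  "connected_graph V E \<longleftrightarrow> (\<forall>u\<in>V. \<forall>v\<in>V. E\<^sup>*\<^sup>* u v)"

definition degree :: "'a set \<Rightarrow> ('a \<Rightarrow> 'a \<Rightarrow> bool) \<Rightarrow> 'a \<Rightarrow> nat" where
  "degree V E v = card {w \<in> V. E v w}"

definition max_degree :: "'a set \<Rightarrow> ('a \<Rightarrow> 'a \<Rightarrow> bool) \<Rightarrow> nat" where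
  "max_degree V E = Max (degree V E ` V)"

definition is_matching :: "('a \<Rightarrow> 'a \<Rightarrow> bool) \<Rightarrow> 'a set set \<Rightarrow> bool" where
  "is_matching E M \<longleftrightarrow> (\<forall>e\<in>M. \<exists>u v. E u v \<and> e = {u, v}) \<and>
     (\<forall>e1\<in>M. \<forall>e2\<in>M. e1 \<noteq> e2 \<longrightarrow> e1 \<inter> e2 = {})"

definition swap :: "'a set set \<Rightarrow> 'a \<Rightarrow> 'a" where
  "swap M x = (if \<exists>y. y \<noteq> x \<and> {x, y} \<in> M then (THE y. y \<noteq> x \<and> {x, y} \<in> M) else x)"

text \<open>Agents are named by their initial vertices; pos ms t a is the vertex of agent a
after t rounds of the matchings ms 0, ms 1, ...\<close>
fun pos :: "(nat \<Rightarrow> 'a set set) \<Rightarrow> nat \<Rightarrow> 'a \<Rightarrow> 'a" where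
  "pos ms 0 = id"
| "pos ms (Suc t) = swap (ms t) \<circ> pos ms t"

definition acquainted :: "('a \<Rightarrow> 'a \<Rightarrow> bool) \<Rightarrow> (nat \<Rightarrow> 'a set set) \<Rightarrow> nat \<Rightarrow> 'a \<Rightarrow> 'a \<Rightarrow> bool" where
  "acquainted E ms k a b \<longleftrightarrow> (\<exists>t\<le>k. E (pos ms t a) (pos ms t b))"

definition is_strategy :: "'a set \<Rightarrow> ('a \<Rightarrow> 'a \<Rightarrow> bool) \<Rightarrow> (nat \<Rightarrow> 'a set set) \<Rightarrow> nat \<Rightarrow> bool" where
  "is_strategy V E ms k \<longleftrightarrow> (\<forall>i<k. is_matching E (ms i)) \<and>
     (\<forall>a\<in>V. \<forall>b\<in>V. a \<noteq> b \<longrightarrow> acquainted E ms k a b)"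

definition acquaintance_time :: "'a set \<Rightarrow> ('a \<Rightarrow> 'a \<Rightarrow> bool) \<Rightarrow> nat" where
  "acquaintance_time V E = (LEAST k. \<exists>ms. is_strategy V E ms k)"

end

theory Submission
  imports Defs "HOL-Library.Sublist" "HOL-Library.Disjoint_Sets"
begin

text \<open>
  Number the vertices \<open>v 0, \<dots>, v (n - 1)\<close> along a tour of a breadth-first spanning tree that
  lists each vertex before its subtrees and traverses the subtrees in reverse order; consecutive
  vertices are then at distance at most 3 in the tree. On the positions \<open>0, \<dots>, n - 1\<close> run
  odd-even transposition sort (oets) blindly, exchanging every admissible neighbouring pair in every
  round: after \<open>n\<close> rounds the order is reversed, so any two agents are exchanged with each other
  in some round. Exchanging the agents at \<open>v j\<close> and \<open>v (j + 1)\<close> takes 5 matchings along the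
  tree path of at most 3 edges joining them, and on the way the two agents become adjacent. The
  paths needed in one round fall into \<open>3\<Delta>\<close> classes of pairwise vertex-disjoint paths, which are
  processed in parallel; so a round costs \<open>15\<Delta>\<close> matchings and \<open>n\<close> rounds cost
  \<open>15\<Delta>n \<le> 20\<Delta>n\<close>.
\<close>

section \<open>Odd-even transposition sort\<close>

definition oets_step :: "nat \<Rightarrow> nat \<Rightarrow> nat \<Rightarrow> nat" where
  "oets_step n t j = (if even (j + t) \<and> Suc j < n then Suc j
                      else if odd (j + t) \<and> 0 < j then j - 1 else j)"

lemma oets_step_involution: "j < n \<Longrightarrow> oets_step n t (oets_step n t j) = j"
  unfolding oets_step_def by (auto simp: even_add)

lemma oets_step_swaps_only_neighbours:
  "j < k \<Longrightarrow> oets_step n t k < oets_step n t j \<Longrightarrow> k = Suc j \<and> even (j + t)"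
  unfolding oets_step_def by (auto split: if_splits simp: even_add)

lemma oets_step_inj: "j < n \<Longrightarrow> k < n \<Longrightarrow> oets_step n t j = oets_step n t k \<Longrightarrow> j = k"
  by (metis oets_step_involution)

text \<open>
  An agent walks around a cycle of \<open>2n\<close> slots, one slot per round, and folding the cycle onto
  \<open>0, \<dots>, n - 1\<close> gives its position; agents starting at even positions walk up first.
\<close>

definition oets_circ :: "nat \<Rightarrow> nat \<Rightarrow> nat \<Rightarrow> nat" where
  "oets_circ n p t = ((if even p then p else 2 * n - 1 - p) + t) mod (2 * n)"

definition oets_pos :: "nat \<Rightarrow> nat \<Rightarrow> nat \<Rightarrow> nat" where
  "oets_pos n p t = (let q = oets_circ n p t in if q < n then q else 2 * n - 1 - q)"

lemma oets_circ_parity: "p < n \<Longrightarrow> even (oets_circ n p t + t)"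
proof -
  assume "p < n"
  then have "even ((if even p then p else 2 * n - 1 - p) + t + t)"
    by (cases "even p") (auto simp: even_add)
  then show ?thesis
    unfolding oets_circ_def by (simp add: even_add dvd_mod_iff)
qed

lemma oets_circ_Suc:
  "oets_circ n p (Suc t) = (if oets_circ n p t + 1 = 2 * n then 0 else oets_circ n p t + 1)"
  unfolding oets_circ_def by (simp add: mod_Suc)

lemma oets_pos_less: "p < n \<Longrightarrow> oets_pos n p t < n"
  unfolding oets_pos_def Let_def oets_circ_def by auto

lemma oets_pos_0: "p < n \<Longrightarrow> oets_pos n p 0 = p"
  unfolding oets_pos_def oets_circ_def Let_def by auto

lemma oets_pos_Suc:
  assumes "p < n"
  shows "oets_pos n p (Suc t) = oets_step n t (oets_pos n p t)"
proof -
  define q where "q = oets_circ n p t"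
  have parity: "even (q + t)"
    using oets_circ_parity assms q_def by blast
  have "q < 2 * n"
    using assms unfolding q_def oets_circ_def by simp
  then consider "q + 1 < n" | "q + 1 = n" | "n \<le> q" "q + 1 < 2 * n" | "q + 1 = 2 * n"
    by linarith
  then show ?thesis
    unfolding oets_pos_def oets_circ_Suc Let_def q_def[symmetric]
    using parity by cases (auto simp: oets_step_def even_add, presburger)
qed

lemma oets_pos_reverses: "p < n \<Longrightarrow> oets_pos n p n = n - 1 - p"
  unfolding oets_pos_def oets_circ_def Let_def by (auto simp: mod_if)

lemma oets_pos_inj: "p < n \<Longrightarrow> q < n \<Longrightarrow> oets_pos n p t = oets_pos n q t \<Longrightarrow> p = q"
proof (induction t)
  case 0
  then show ?case by (simp add: oets_pos_0)
next
  case (Suc t)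
  then show ?case
    using oets_step_inj oets_pos_less oets_pos_Suc by metis
qed

lemma int_seq_sign_change:
  fixes f :: "nat \<Rightarrow> int"
  assumes "\<And>t. f t \<noteq> 0" "f 0 > 0" "f m < 0"
  shows "\<exists>t<m. f t > 0 \<and> f (Suc t) < 0"
  using assms(3)
proof (induction m)
  case 0
  then show ?case using assms(2) by simp
next
  case (Suc m)
  show ?case
  proof (cases "f m < 0")
    case True
    then show ?thesis using Suc.IH less_SucI by blast
  next
    case False
    then have "f m > 0" using assms(1)[of m] by linarith
    then show ?thesis using Suc.prems by blast
  qed
qed

lemma oets_meet:
  assumes "p < q" "q < n"
  shows "\<exists>t<n. oets_pos n q t = Suc (oets_pos n p t) \<and> even (oets_pos n p t + t)"
proof -
  define d where "d t = int (oets_pos n q t) - int (oets_pos n p t)" for t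
  have "p < n" using assms by simp
  have "d t \<noteq> 0" for t
    using oets_pos_inj[OF \<open>p < n\<close> assms(2), of t] assms(1) unfolding d_def by auto
  moreover have "d 0 > 0" "d n < 0"
    using assms unfolding d_def by (simp_all add: oets_pos_0 oets_pos_reverses)
  ultimately obtain t where t: "t < n" "d t > 0" "d (Suc t) < 0"
    using int_seq_sign_change by blast
  then have "oets_pos n p t < oets_pos n q t"
    "oets_step n t (oets_pos n q t) < oets_step n t (oets_pos n p t)"
    unfolding d_def oets_pos_Suc[OF \<open>p < n\<close>] oets_pos_Suc[OF assms(2)] by auto
  then show ?thesis
    using oets_step_swaps_only_neighbours t(1) by blast
qed

text \<open>
  A round can be carried out in phases: \<open>c j\<close> is the phase in which the pair \<open>(j, j + 1)\<close> is
  exchanged, and \<open>oets_phases n t c m\<close> is the effect of the phases below \<open>m\<close>.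
\<close>

definition oets_phase :: "nat \<Rightarrow> nat \<Rightarrow> (nat \<Rightarrow> nat) \<Rightarrow> nat \<Rightarrow> nat \<Rightarrow> nat" where
  "oets_phase n t c m q = (if even (q + t) \<and> Suc q < n \<and> c q = m then Suc q
                           else if odd (q + t) \<and> 0 < q \<and> c (q - 1) = m then q - 1 else q)"

definition oets_phases :: "nat \<Rightarrow> nat \<Rightarrow> (nat \<Rightarrow> nat) \<Rightarrow> nat \<Rightarrow> nat \<Rightarrow> nat" where
  "oets_phases n t c m q = (if even (q + t) \<and> Suc q < n \<and> c q < m then Suc q
                            else if odd (q + t) \<and> 0 < q \<and> c (q - 1) < m then q - 1 else q)"

lemma oets_phases_0: "oets_phases n t c 0 q = q"
  by (simp add: oets_phases_def)

lemma oets_phases_less: "q < n \<Longrightarrow> oets_phases n t c m q < n"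
  unfolding oets_phases_def by auto

lemma oets_phases_Suc:
  "oets_phases n t c (Suc m) q = oets_phase n t c m (oets_phases n t c m q)"
proof (cases "even (q + t)")
  case True
  then show ?thesis
    by (cases "Suc q < n"; cases "c q < m"; cases "c q = m")
      (auto simp: oets_phase_def oets_phases_def)
next
  case odd: False
  show ?thesis
  proof (cases q)
    case (Suc p)
    with odd have "even (p + t)" by simp
    with Suc show ?thesis
      by (cases "c p < m"; cases "c p = m") (auto simp: oets_phase_def oets_phases_def)
  qed (use odd in \<open>auto simp: oets_phase_def oets_phases_def\<close>)
qed

lemma oets_phases_complete:
  assumes "\<And>j. Suc j < n \<Longrightarrow> c j < m" "q < n"
  shows "oets_phases n t c m q = oets_step n t q"
  using assms unfolding oets_phases_def oets_step_def by (auto simp: even_add)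

section \<open>Swapping along matchings\<close>

lemma swap_eq_partner:
  assumes "pairwise disjnt M" "{u, v} \<in> M" "u \<noteq> v"
  shows "swap M u = v"
proof -
  have unique: "y = v" if "y \<noteq> u" "{u, y} \<in> M" for y
  proof (rule ccontr)
    assume "y \<noteq> v"
    then have "v \<notin> {u, y}"
      using assms(3) by simp
    then have "{u, y} \<noteq> {u, v}"
      by blast
    then have "disjnt {u, y} {u, v}"
      using pairwiseD[OF assms(1) that(2) assms(2)] by blast
    then show False by (simp add: disjnt_def)
  qed
  then have "(THE y. y \<noteq> u \<and> {u, y} \<in> M) = v"
    using assms(2,3) unique by (intro the_equality) auto
  then show ?thesis
    using assms(2,3) unfolding swap_def by auto
qed

lemma swap_unmatched: "(\<And>e. e \<in> M \<Longrightarrow> u \<notin> e) \<Longrightarrow> swap M u = u"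
  unfolding swap_def by auto

lemma swap_empty [simp]: "swap {} w = w"
  by (simp add: swap_def)

lemma swap_singleton: "swap {{a, b}} w = (if w = a then b else if w = b then a else w)"
proof (cases "a = b")
  case True
  then show ?thesis unfolding swap_def by (auto simp: doubleton_eq_iff)
next
  case False
  have "pairwise disjnt {{a, b}}" by simp
  then show ?thesis
    using False swap_eq_partner[of "{{a, b}}" a b] swap_eq_partner[of "{{a, b}}" b a]
    by (auto intro: swap_unmatched simp: insert_commute)
qed

lemma swap_mem:
  assumes "pairwise disjnt M" "\<Union>M \<subseteq> S" "w \<in> S"
  shows "swap M w \<in> S"
proof (cases "\<exists>y. y \<noteq> w \<and> {w, y} \<in> M")
  case True
  then obtain y where "y \<noteq> w" "{w, y} \<in> M" by blast
  then show ?thesis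
    using swap_eq_partner[OF assms(1)] assms(2) by auto
next
  case False
  then show ?thesis
    using assms(3) unfolding swap_def by auto
qed

lemma pairwise_disjnt_UN_disjoint_family:
  assumes local: "\<And>j. j \<in> J \<Longrightarrow> pairwise disjnt (N j) \<and> \<Union>(N j) \<subseteq> S j"
    and disj: "disjoint_family_on S J"
  shows "pairwise disjnt (\<Union>j\<in>J. N j)"
proof (rule pairwiseI)
  fix e e' assume "e \<in> (\<Union>j\<in>J. N j)" "e' \<in> (\<Union>j\<in>J. N j)" "e \<noteq> e'"
  then obtain j j' where j: "j \<in> J" "e \<in> N j" "j' \<in> J" "e' \<in> N j'" by blast
  show "disjnt e e'"
  proof (cases "j = j'")
    case True
    then show ?thesis using local[OF j(1)] j \<open>e \<noteq> e'\<close> by (auto dest: pairwiseD)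
  next
    case False
    then have "S j \<inter> S j' = {}" using disjoint_family_onD[OF disj j(1) j(3)] by simp
    moreover have "e \<subseteq> S j" "e' \<subseteq> S j'" using local j by blast+
    ultimately show ?thesis by (auto simp: disjnt_def)
  qed
qed

lemma swap_UN_disjoint_family:
  assumes local: "\<And>j. j \<in> J \<Longrightarrow> pairwise disjnt (N j) \<and> \<Union>(N j) \<subseteq> S j"
    and disj: "disjoint_family_on S J"
  shows "j \<in> J \<Longrightarrow> w \<in> S j \<Longrightarrow> swap (\<Union>j\<in>J. N j) w = swap (N j) w"
    and "w \<notin> (\<Union>j\<in>J. S j) \<Longrightarrow> swap (\<Union>j\<in>J. N j) w = w"
proof -
  have partner: "{w, y} \<in> (\<Union>j\<in>J. N j) \<longleftrightarrow> {w, y} \<in> N j" if "j \<in> J" "w \<in> S j" for j w y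
  proof
    assume "{w, y} \<in> (\<Union>j\<in>J. N j)"
    then obtain j' where j': "j' \<in> J" "{w, y} \<in> N j'" by blast
    then have "w \<in> S j'" using local[OF j'(1)] by blast
    then have "j' = j" using disjoint_family_onD[OF disj j'(1) that(1)] that(2) by blast
    then show "{w, y} \<in> N j" using j'(2) by simp
  qed (use that in blast)
  show "swap (\<Union>j\<in>J. N j) w = swap (N j) w" if "j \<in> J" "w \<in> S j"
  proof (cases "\<exists>y. y \<noteq> w \<and> {w, y} \<in> N j")
    case True
    then obtain y where "y \<noteq> w" "{w, y} \<in> N j" by blast
    then show ?thesis
      using swap_eq_partner pairwise_disjnt_UN_disjoint_family[OF local disj] local partner that
      by metis
  next
    case False
    then show ?thesis
      using partner[OF that] unfolding swap_def by auto
  qed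
  show "swap (\<Union>j\<in>J. N j) w = w" if "w \<notin> (\<Union>j\<in>J. S j)"
    using local that by (intro swap_unmatched) blast
qed

lemma pos_add: "pos ms (T + s) = pos (\<lambda>i. ms (T + i)) s \<circ> pos ms T"
  by (induction s) auto

lemma pos_cong: "(\<And>i. i < s \<Longrightarrow> ms i = ms' i) \<Longrightarrow> pos ms s = pos ms' s"
  by (induction s) auto

lemma pos_UN_disjoint_family:
  assumes local: "\<And>j i. j \<in> J \<Longrightarrow> pairwise disjnt (N j i) \<and> \<Union>(N j i) \<subseteq> S j"
    and disj: "disjoint_family_on S J"
  shows "j \<in> J \<Longrightarrow> w \<in> S j \<Longrightarrow> pos (\<lambda>i. \<Union>j\<in>J. N j i) s w = pos (N j) s w"
    and "w \<notin> (\<Union>j\<in>J. S j) \<Longrightarrow> pos (\<lambda>i. \<Union>j\<in>J. N j i) s w = w"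
proof -
  assume j: "j \<in> J" "w \<in> S j"
  have "pos (N j) s w \<in> S j" for s
  proof (induction s)
    case (Suc s)
    then show ?case using local[OF j(1), of s] swap_mem[of "N j s" "S j"] by simp
  qed (simp add: j)
  then show "pos (\<lambda>i. \<Union>j\<in>J. N j i) s w = pos (N j) s w"
    by (induction s) (simp_all add: swap_UN_disjoint_family(1)[OF local disj j(1)])
next
  assume "w \<notin> (\<Union>j\<in>J. S j)"
  then show "pos (\<lambda>i. \<Union>j\<in>J. N j i) s w = w"
    by (induction s) (simp_all add: swap_UN_disjoint_family(2)[OF local disj])
qed

section \<open>Exchanging the ends of a short path\<close>

text \<open>
  The first sweep along the path carries the agent at the head to the end, the second sweep
  carries the agent displaced from the end back to the head; all other agents return home.
\<close>

definition path_schedule :: "'a list \<Rightarrow> nat \<Rightarrow> 'a set set" where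
  "path_schedule P k =
     (let es = [0..<length P - 1] @ rev [0..<length P - 2]
      in if k < length es then {{P ! (es ! k), P ! Suc (es ! k)}} else {})"

lemma path_schedule_edge:
  assumes "e \<in> path_schedule P k"
  shows "\<exists>i. Suc i < length P \<and> e = {P ! i, P ! Suc i}"
proof -
  define es where "es = [0..<length P - 1] @ rev [0..<length P - 2]"
  have "k < length es" "e = {P ! (es ! k), P ! Suc (es ! k)}"
    using assms unfolding path_schedule_def es_def[symmetric] Let_def by (auto split: if_splits)
  moreover have "Suc (es ! k) < length P" if "k < length es"
    using nth_mem[OF that] unfolding es_def by auto
  ultimately show ?thesis by blast
qed

lemma path_schedule_pairwise_disjnt: "pairwise disjnt (path_schedule P k)"
  by (simp add: path_schedule_def Let_def)

lemma path_schedule_subset: "\<Union>(path_schedule P k) \<subseteq> set P"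
  using path_schedule_edge by fastforce

lemma short_list_cases:
  assumes "2 \<le> length P" "length P \<le> 4"
  obtains a b where "P = [a, b]" | a b c where "P = [a, b, c]" | a b c d where "P = [a, b, c, d]"
  using assms by (auto simp: le_Suc_eq numeral_eq_Suc length_Suc_conv)

lemma path_schedule_swaps_ends:
  assumes "distinct P" "2 \<le> length P" "length P \<le> 4"
  shows "pos (path_schedule P) 5 w = (if w = hd P then last P else if w = last P then hd P else w)"
  using assms(2,3)
proof (cases rule: short_list_cases)
  case (1 a b)
  then show ?thesis
    using assms(1) by (simp add: path_schedule_def swap_singleton numeral_eq_Suc)
next
  case (2 a b c)
  then show ?thesis
    using assms(1) by (simp add: path_schedule_def swap_singleton numeral_eq_Suc) blast
next
  case (3 a b c d)
  then show ?thesis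
    using assms(1) by (simp add: path_schedule_def swap_singleton numeral_eq_Suc) blast
qed

lemma path_schedule_meets:
  assumes "distinct P" "2 \<le> length P" "length P \<le> 4"
  shows "\<exists>s<5. \<exists>i. Suc i < length P \<and>
           pos (path_schedule P) s (hd P) = P ! i \<and> pos (path_schedule P) s (last P) = P ! Suc i"
  using assms(2,3)
proof (cases rule: short_list_cases)
  case (1 a b)
  then show ?thesis by (intro exI[of _ 0]) auto
next
  case (2 a b c)
  then show ?thesis
    using assms(1) by (intro exI[of _ 1] exI[of _ 1]) (auto simp: path_schedule_def swap_singleton)
next
  case (3 a b c d)
  then show ?thesis
    using assms(1) by (intro exI[of _ 2] exI[of _ 2])
      (auto simp: path_schedule_def swap_singleton numeral_eq_Suc)
qed

lemma sublist_pair_nth: "Suc i < length xs \<Longrightarrow> sublist [xs ! i, xs ! Suc i] xs"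
  unfolding sublist_def
  by (rule exI[of _ "take i xs"], rule exI[of _ "drop (Suc (Suc i)) xs"])
    (simp add: Cons_nth_drop_Suc)

lemma sublist_pair_Cons:
  "sublist [a, b] (x # xs) \<longleftrightarrow> (a = x \<and> xs \<noteq> [] \<and> b = hd xs) \<or> sublist [a, b] xs"
  by (cases xs) (auto simp: sublist_Cons_right)

lemma sublist_pair_append:
  "sublist [a, b] (xs @ ys) \<longleftrightarrow>
     sublist [a, b] xs \<or> sublist [a, b] ys \<or> (xs \<noteq> [] \<and> ys \<noteq> [] \<and> a = last xs \<and> b = hd ys)"
  by (induction xs) (auto simp: sublist_pair_Cons)

lemma sublist_pair_concat:
  assumes "\<And>xs. xs \<in> set xss \<Longrightarrow> xs \<noteq> []" "sublist [a, b] (concat xss)"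
  shows "(\<exists>xs\<in>set xss. sublist [a, b] xs) \<or>
         (\<exists>i. Suc i < length xss \<and> a = last (xss ! i) \<and> b = hd (xss ! Suc i))"
  using assms
proof (induction xss)
  case (Cons xs xss)
  consider "sublist [a, b] xs" | "sublist [a, b] (concat xss)"
    | "concat xss \<noteq> []" "a = last xs" "b = hd (concat xss)"
    using Cons.prems by (auto simp: sublist_pair_append)
  then show ?case
  proof cases
    case 2
    then have "(\<exists>xs\<in>set xss. sublist [a, b] xs) \<or>
        (\<exists>i. Suc i < length xss \<and> a = last (xss ! i) \<and> b = hd (xss ! Suc i))"
      using Cons by simp
    then show ?thesis
      by (metis Suc_less_eq length_Cons list.set_intros(2) nth_Cons_Suc)
  next
    case 3
    then obtain ys yss where "xss = ys # yss" "ys \<noteq> []"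
      using Cons.prems(1) by (cases xss) auto
    then show ?thesis
      using 3 by (intro disjI2 exI[of _ 0]) auto
  qed simp
qed simp

section \<open>Tours of a breadth-first spanning tree\<close>

lemma nat_eq_if_mod_eq_close:
  fixes a b m :: nat
  assumes "a mod m = b mod m" "a < b + m" "b < a + m"
  shows "a = b"
proof -
  have "a = b" if "a \<le> b" "a mod m = b mod m" "b < a + m" for a b
  proof -
    have "m dvd b - a"
      using that(1,2) mod_eq_dvd_iff_nat by metis
    moreover have "b - a < m"
      using that(1,3) by arith
    ultimately show ?thesis
      using that(1) by (metis diff_is_0_eq le_antisym nat_dvd_not_less not_gr_zero)
  qed
  then show ?thesis
    using assms by (metis nat_le_linear)
qed

text \<open>
  \<open>tour_upto\<close> recurses on explicit fuel; \<open>tour\<close> supplies enough fuel to reach the leaves.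
\<close>

fun tour_upto :: "('a \<Rightarrow> 'a list) \<Rightarrow> nat \<Rightarrow> 'a \<Rightarrow> 'a list" where
  "tour_upto ch 0 x = [x]"
| "tour_upto ch (Suc f) x = x # concat (map (\<lambda>c. rev (tour_upto ch f c)) (ch x))"

locale rooted_graph =
  fixes V :: "'a set" and E :: "'a \<Rightarrow> 'a \<Rightarrow> bool" and root :: 'a
  assumes graph: "fin_graph V E" and connected: "connected_graph V E" and root_in: "root \<in> V"
begin

lemma finite_V: "finite V"
  using graph unfolding fin_graph_def by blast

lemma edge_in_V: "E u v \<Longrightarrow> u \<in> V \<and> v \<in> V"
  using graph unfolding fin_graph_def by blast

lemma edge_sym: "E u v \<Longrightarrow> E v u"
  using graph unfolding fin_graph_def by blast

definition depth :: "'a \<Rightarrow> nat" where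
  "depth v = (LEAST k. (E ^^ k) root v)"

lemma relpowp_depth: "v \<in> V \<Longrightarrow> (E ^^ depth v) root v"
  unfolding depth_def
  using connected root_in rtranclp_power[of E root v] unfolding connected_graph_def
  by (metis LeastI)

lemma depth_le: "(E ^^ k) root v \<Longrightarrow> depth v \<le> k"
  unfolding depth_def by (rule Least_le)

lemma depth_root: "depth root = 0"
  using depth_le[of 0 root] by simp

lemma depth_eq_0_iff: "v \<in> V \<Longrightarrow> depth v = 0 \<longleftrightarrow> v = root"
  using relpowp_depth depth_root by fastforce

definition parent :: "'a \<Rightarrow> 'a" where
  "parent v = (SOME u. E u v \<and> Suc (depth u) = depth v)"

lemma parent:
  assumes "v \<in> V" "v \<noteq> root"
  shows "E (parent v) v" "parent v \<in> V" "Suc (depth (parent v)) = depth v"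
proof -
  obtain k where k: "depth v = Suc k"
    using assms depth_eq_0_iff not0_implies_Suc by blast
  then obtain u where u: "(E ^^ k) root u" "E u v"
    using relpowp_depth[OF assms(1)] by (metis relpowp_Suc_E)
  then have "depth v \<le> Suc (depth u)"
    using depth_le relpowp_Suc_I[OF relpowp_depth] edge_in_V by blast
  then have "E u v \<and> Suc (depth u) = depth v"
    using depth_le[OF u(1)] k u(2) by simp
  then have "E (parent v) v \<and> Suc (depth (parent v)) = depth v"
    unfolding parent_def by (rule someI)
  then show "E (parent v) v" "parent v \<in> V" "Suc (depth (parent v)) = depth v"
    using edge_in_V by auto
qed

lemma funpow_parent:
  assumes "w \<in> V" "m \<le> depth w"
  shows "(parent ^^ m) w \<in> V \<and> depth ((parent ^^ m) w) = depth w - m"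
  using assms(2)
proof (induction m)
  case (Suc m)
  then have IH: "(parent ^^ m) w \<in> V" "depth ((parent ^^ m) w) = depth w - m"
    by simp_all
  then have "(parent ^^ m) w \<noteq> root"
    using depth_root Suc.prems by auto
  then show ?case
    using parent[OF IH(1)] IH(2) by auto
qed (use assms(1) in simp)

definition children :: "'a \<Rightarrow> 'a set" where
  "children x = {v \<in> V. v \<noteq> root \<and> parent v = x}"

definition child_list :: "'a \<Rightarrow> 'a list" where
  "child_list x = (SOME cs. distinct cs \<and> set cs = children x)"

lemma child_list: "distinct (child_list x)" "set (child_list x) = children x"
proof -
  have "finite (children x)"
    using finite_V unfolding children_def by simp
  then have "\<exists>cs. distinct cs \<and> set cs = children x"
    using finite_distinct_list by blast
  then have "distinct (child_list x) \<and> set (child_list x) = children x"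
    unfolding child_list_def by (rule someI_ex)
  then show "distinct (child_list x)" "set (child_list x) = children x"
    by simp_all
qed

lemma child_list_mem:
  assumes "c \<in> set (child_list x)"
  shows "c \<in> V" "x \<in> V" "parent c = x" "E x c" "depth c = Suc (depth x)"
  using assms parent[of c] unfolding child_list children_def by auto

lemma length_child_list: "length (child_list x) \<le> degree V E x"
proof -
  have "length (child_list x) = card (children x)"
    using child_list distinct_card by metis
  also have "\<dots> \<le> card {w \<in> V. E x w}"
    using finite_V child_list_mem by (intro card_mono) (auto simp: child_list)
  finally show ?thesis
    unfolding degree_def .
qed

definition height :: nat where
  "height = Max (depth ` V)"

lemma depth_le_height: "v \<in> V \<Longrightarrow> depth v \<le> height"
  unfolding height_def using finite_V by simp

lemma tree_induct [consumes 1, case_names step]: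
  assumes "x \<in> V" "\<And>x. x \<in> V \<Longrightarrow> (\<And>c. c \<in> set (child_list x) \<Longrightarrow> P c) \<Longrightarrow> P x"
  shows "P x"
  using assms(1)
proof (induction "height - depth x" arbitrary: x rule: less_induct)
  case less
  show ?case
  proof (rule assms(2)[OF less.prems])
    fix c assume c: "c \<in> set (child_list x)"
    then have "height - depth c < height - depth x"
      using child_list_mem[OF c] depth_le_height[of c] by simp
    then show "P c"
      using less.hyps child_list_mem(1)[OF c] by blast
  qed
qed

definition tour :: "'a \<Rightarrow> 'a list" where
  "tour x = tour_upto child_list (height - depth x) x"

lemma tour_unfold:
  assumes "x \<in> V"
  shows "tour x = x # concat (map (\<lambda>c. rev (tour c)) (child_list x))"
proof (cases "depth x < height")
  case True
  then obtain f where f: "height - depth x = Suc f"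
    by (metis zero_less_diff not0_implies_Suc neq0_conv)
  have "height - depth c = f" if "c \<in> set (child_list x)" for c
    using child_list_mem[OF that] f by simp
  then have children: "map (\<lambda>c. rev (tour_upto child_list f c)) (child_list x) =
             map (\<lambda>c. rev (tour c)) (child_list x)"
    by (intro map_cong) (simp_all add: tour_def)
  then show ?thesis
    by (simp only: tour_def[of x] f tour_upto.simps)
next
  case False
  have "child_list x = []"
  proof (rule ccontr)
    assume "child_list x \<noteq> []"
    then obtain c where "c \<in> set (child_list x)"
      by (cases "child_list x") auto
    then show False
      using child_list_mem depth_le_height False by fastforce
  qed
  moreover have "height - depth x = 0"
    using False by simp
  ultimately show ?thesis
    unfolding tour_def by simp
qed

lemma tour_ne: "x \<in> V \<Longrightarrow> tour x \<noteq> []"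
  by (simp add: tour_unfold)

lemma hd_tour: "x \<in> V \<Longrightarrow> hd (tour x) = x"
  by (simp add: tour_unfold)

definition tour_end :: "'a \<Rightarrow> 'a" where
  "tour_end x = (if child_list x = [] then x else last (child_list x))"

lemma last_tour:
  assumes "x \<in> V"
  shows "last (tour x) = tour_end x"
proof (cases "child_list x" rule: rev_cases)
  case (snoc cs c)
  then have "c \<in> V"
    using child_list_mem(1)[of c x] by simp
  then show ?thesis
    using tour_unfold[OF assms] snoc tour_ne hd_tour by (simp add: tour_end_def last_rev)
qed (simp add: tour_unfold[OF assms] tour_end_def)

definition descendants :: "'a \<Rightarrow> 'a set" where
  "descendants x = {w \<in> V. depth x \<le> depth w \<and> (parent ^^ (depth w - depth x)) w = x}"

lemma descendants_root: "descendants root = V"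
proof -
  have "(parent ^^ depth w) w = root" if "w \<in> V" for w
    using funpow_parent[OF that, of "depth w"] depth_eq_0_iff by auto
  then show ?thesis
    unfolding descendants_def depth_root by auto
qed

lemma descendants_disjoint:
  "depth x = depth x' \<Longrightarrow> x \<noteq> x' \<Longrightarrow> descendants x \<inter> descendants x' = {}"
  unfolding descendants_def by auto

lemma self_in_descendants: "x \<in> V \<Longrightarrow> x \<in> descendants x"
  unfolding descendants_def by simp

lemma descendants_child_subset:
  assumes "c \<in> set (child_list x)"
  shows "descendants c \<subseteq> descendants x"
proof
  fix w assume w: "w \<in> descendants c"
  then have "depth w - depth x = Suc (depth w - depth c)"
    using child_list_mem(5)[OF assms] unfolding descendants_def by auto
  then have "(parent ^^ (depth w - depth x)) w = parent ((parent ^^ (depth w - depth c)) w)"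
    by simp
  then show "w \<in> descendants x"
    using w child_list_mem[OF assms] unfolding descendants_def by auto
qed

lemma descendants_unfold:
  assumes "x \<in> V"
  shows "descendants x = insert x (\<Union>c\<in>set (child_list x). descendants c)"
proof
  show "descendants x \<subseteq> insert x (\<Union>c\<in>set (child_list x). descendants c)"
  proof
    fix w assume w: "w \<in> descendants x"
    show "w \<in> insert x (\<Union>c\<in>set (child_list x). descendants c)"
    proof (cases "depth w = depth x")
      case False
      define m where "m = depth w - depth x - 1"
      define c where "c = (parent ^^ m) w"
      have m: "m \<le> depth w" "depth w - depth x = Suc m"
        using False w unfolding m_def descendants_def by auto
      have c_in: "c \<in> V" "depth c = depth w - m"
        using funpow_parent[of w m] m(1) w unfolding c_def descendants_def by auto
      then have "c \<noteq> root"
        using m(2) depth_root by auto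
      moreover have "parent c = x"
        using w m(2) unfolding c_def descendants_def by auto
      ultimately have "c \<in> set (child_list x)"
        using c_in unfolding child_list children_def by simp
      moreover have "w \<in> descendants c"
        using w c_in m unfolding descendants_def c_def by auto
      ultimately show ?thesis by blast
    qed (use w in \<open>simp add: descendants_def\<close>)
  qed
qed (use assms self_in_descendants descendants_child_subset in blast)

lemma set_tour: "x \<in> V \<Longrightarrow> set (tour x) = descendants x"
proof (induction x rule: tree_induct)
  case (step x)
  then show ?case
    using child_list_mem(1) by (simp add: tour_unfold[OF step.hyps] descendants_unfold[OF step.hyps])
qed

lemma distinct_tour: "x \<in> V \<Longrightarrow> distinct (tour x)"
proof (induction x rule: tree_induct)
  case (step x)
  have "inj_on (\<lambda>c. rev (tour c)) (set (child_list x))"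
    using hd_tour child_list_mem(1) by (intro inj_onI) (metis rev_rev_ident)
  then have "distinct (map (\<lambda>c. rev (tour c)) (child_list x))"
    by (simp add: distinct_map child_list)
  moreover have "set (tour c) \<inter> set (tour c') = {}"
    if "c \<in> set (child_list x)" "c' \<in> set (child_list x)" "tour c \<noteq> tour c'" for c c'
    using that child_list_mem[of c x] child_list_mem[of c' x]
    by (metis set_tour descendants_disjoint)
  ultimately have "distinct (concat (map (\<lambda>c. rev (tour c)) (child_list x)))"
    using step.IH by (intro distinct_concat) (auto, blast)
  moreover have "x \<notin> descendants c" if "c \<in> set (child_list x)" for c
    using child_list_mem(5)[OF that] unfolding descendants_def by auto
  ultimately show ?case
    using child_list_mem(1) by (auto simp: tour_unfold[OF step.hyps] set_tour)
qed

text \<open>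
  Two consecutive vertices of a tour are joined by a path which runs from the root \<open>y\<close> of a
  subtree, or from the child of \<open>y\<close> before \<open>c\<close>, through the child \<open>c\<close> of \<open>y\<close> to the
  end of the tour of \<open>c\<close>.
\<close>

definition link_path :: "'a \<Rightarrow> nat \<Rightarrow> 'a list" where
  "link_path y i =
     (let c = child_list y ! i
      in (if i = 0 then [y] else [child_list y ! (i - 1), y]) @
         (if child_list c = [] then [c] else [c, last (child_list c)]))"

lemma hd_link_path: "hd (link_path y i) = (if i = 0 then y else child_list y ! (i - 1))"
  by (simp add: link_path_def Let_def)

lemma last_link_path: "last (link_path y i) = tour_end (child_list y ! i)"
  by (simp add: link_path_def Let_def tour_end_def)

lemma link_path:
  assumes "y \<in> V" "i < length (child_list y)"
  shows "distinct (link_path y i)" "2 \<le> length (link_path y i)" "length (link_path y i) \<le> 4"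
    and "sublist [a, b] (link_path y i) \<Longrightarrow> E a b"
    and "w \<in> set (link_path y i) \<Longrightarrow> w \<in> descendants y \<and> depth w \<le> depth y + 2"
proof -
  define c where "c = child_list y ! i"
  define c' where "c' = child_list y ! (i - 1)"
  define g where "g = last (child_list c)"
  have c: "c \<in> set (child_list y)"
    using assms(2) unfolding c_def by simp
  have c': "i \<noteq> 0 \<Longrightarrow> c' \<in> set (child_list y) \<and> c' \<noteq> c"
    using assms(2) child_list(1) unfolding c_def c'_def by (auto simp: nth_eq_iff_index_eq)
  have g: "child_list c \<noteq> [] \<Longrightarrow> g \<in> set (child_list c)"
    unfolding g_def by simp
  have P: "link_path y i = (if i = 0 then [y] else [c', y]) @ (if child_list c = [] then [c] else [c, g])"
    unfolding link_path_def c_def c'_def g_def Let_def by simp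
  have depths: "depth c = Suc (depth y)" "i \<noteq> 0 \<Longrightarrow> depth c' = Suc (depth y)"
    "child_list c \<noteq> [] \<Longrightarrow> depth g = Suc (Suc (depth y))"
    using child_list_mem(5)[OF c] child_list_mem(5)[of c' y] child_list_mem(5)[of g c] c' g
    by simp_all
  have edges: "E y c" "i \<noteq> 0 \<Longrightarrow> E c' y" "child_list c \<noteq> [] \<Longrightarrow> E c g"
    using child_list_mem(4)[OF c] child_list_mem(4)[of c' y] child_list_mem(4)[of g c] c' g
    by (auto intro: edge_sym)
  have desc: "c \<in> descendants y" "i \<noteq> 0 \<Longrightarrow> c' \<in> descendants y"
    "child_list c \<noteq> [] \<Longrightarrow> g \<in> descendants y"
    using c c' g self_in_descendants child_list_mem(1) descendants_child_subset by blast+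
  show "distinct (link_path y i)"
    unfolding P using depths c' by auto
  show "2 \<le> length (link_path y i)" "length (link_path y i) \<le> 4"
    unfolding P by auto
  show "sublist [a, b] (link_path y i) \<Longrightarrow> E a b"
    unfolding P using edges by (auto simp: sublist_pair_Cons split: if_splits)
  show "w \<in> set (link_path y i) \<Longrightarrow> w \<in> descendants y \<and> depth w \<le> depth y + 2"
    unfolding P using desc depths self_in_descendants[OF assms(1)] by (auto split: if_splits)
qed

lemma sublist_tour_cases:
  assumes "x \<in> V" "sublist [a, b] (tour x)"
  shows "(\<exists>c\<in>set (child_list x). sublist [b, a] (tour c)) \<or>
         (\<exists>i<length (child_list x). a = hd (link_path x i) \<and> b = last (link_path x i))"
proof -
  let ?tours = "map (\<lambda>c. rev (tour c)) (child_list x)"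
  have tours_ne: "ys \<noteq> []" if "ys \<in> set ?tours" for ys
    using that child_list_mem(1) tour_ne by auto
  have ends_rev_tour: "last (rev (tour c)) = c" "hd (rev (tour c)) = tour_end c"
    if "c \<in> set (child_list x)" for c
    using that child_list_mem(1) tour_ne hd_tour last_tour by (simp_all add: last_rev hd_rev)
  consider "a = x" "child_list x \<noteq> []" "b = hd (concat ?tours)"
    | "sublist [a, b] (concat ?tours)"
    using assms(2) tours_ne unfolding tour_unfold[OF assms(1)] sublist_pair_Cons
    by (auto simp: concat_eq_Nil_conv)
  then show ?thesis
  proof cases
    case 1
    then obtain c cs where "child_list x = c # cs"
      by (cases "child_list x") auto
    moreover have "tour c \<noteq> []"
      using calculation child_list_mem(1)[of c x] tour_ne by simp
    ultimately have "a = hd (link_path x 0) \<and> b = last (link_path x 0)"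
      using 1 ends_rev_tour by (simp add: hd_link_path last_link_path)
    then show ?thesis
      using \<open>child_list x = c # cs\<close> by auto
  next
    case 2
    then consider ys where "ys \<in> set ?tours" "sublist [a, b] ys"
      | k where "Suc k < length ?tours" "a = last (?tours ! k)" "b = hd (?tours ! Suc k)"
      using sublist_pair_concat[of ?tours a b] tours_ne by blast
    then show ?thesis
    proof cases
      case 1
      then show ?thesis by (auto simp: sublist_rev_right)
    next
      case (2 k)
      then have "a = hd (link_path x (Suc k)) \<and> b = last (link_path x (Suc k))"
        using ends_rev_tour by (simp add: hd_link_path last_link_path)
      then show ?thesis
        using 2(1) by auto
    qed
  qed
qed

lemma sublist_tour_link_path:
  assumes "x \<in> V" "sublist [a, b] (tour x)"
  shows "\<exists>y\<in>descendants x. \<exists>i<length (child_list y).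
           {a, b} = {hd (link_path y i), last (link_path y i)}"
  using assms
proof (induction x arbitrary: a b rule: tree_induct)
  case (step x)
  from sublist_tour_cases[OF step.hyps step.prems] show ?case
  proof (elim disjE bexE exE conjE)
    fix c assume c: "c \<in> set (child_list x)" "sublist [b, a] (tour c)"
    then show ?thesis
      using step.IH[OF c] descendants_child_subset[OF c(1)] by (fastforce simp: insert_commute)
  next
    fix i assume "i < length (child_list x)" "a = hd (link_path x i)" "b = last (link_path x i)"
    then show ?thesis
      using self_in_descendants[OF step.hyps] by blast
  qed
qed

lemma link_paths_disjoint:
  assumes "y \<in> V" "i < length (child_list y)" "y' \<in> V" "i' < length (child_list y')"
    and "y \<noteq> y'" "depth y mod 3 = depth y' mod 3"
  shows "set (link_path y i) \<inter> set (link_path y' i') = {}"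
proof (rule ccontr)
  assume "set (link_path y i) \<inter> set (link_path y' i') \<noteq> {}"
  then obtain w where w: "w \<in> descendants y" "depth w \<le> depth y + 2"
    "w \<in> descendants y'" "depth w \<le> depth y' + 2"
    using link_path(5)[OF assms(1,2)] link_path(5)[OF assms(3,4)] by blast
  then have "depth y \<le> depth w" "depth y' \<le> depth w"
    unfolding descendants_def by simp_all
  then have "depth y = depth y'"
    using w(2,4) by (intro nat_eq_if_mod_eq_close[OF assms(6)]) linarith+
  then have "descendants y \<inter> descendants y' = {}"
    using descendants_disjoint assms(5) by simp
  then show False
    using w(1,3) by blast
qed

section \<open>The strategy\<close>

definition vertex :: "nat \<Rightarrow> 'a" where
  "vertex j = tour root ! j"

lemma length_tour_root: "length (tour root) = card V"
  using distinct_card[OF distinct_tour[OF root_in]] set_tour[OF root_in] descendants_root by simp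

lemma vertex_inj: "j < card V \<Longrightarrow> k < card V \<Longrightarrow> vertex j = vertex k \<Longrightarrow> j = k"
  using distinct_tour[OF root_in] length_tour_root unfolding vertex_def
  by (simp add: nth_eq_iff_index_eq)

lemma vertex_surj: "v \<in> V \<Longrightarrow> \<exists>j<card V. vertex j = v"
  using set_tour[OF root_in] descendants_root length_tour_root unfolding vertex_def
  by (metis in_set_conv_nth)

definition link_top_idx :: "nat \<Rightarrow> 'a \<times> nat" where
  "link_top_idx j = (SOME (y, i). y \<in> V \<and> i < length (child_list y) \<and>
     {vertex j, vertex (Suc j)} = {hd (link_path y i), last (link_path y i)})"

definition link_top :: "nat \<Rightarrow> 'a" where
  "link_top j = fst (link_top_idx j)"

definition link_idx :: "nat \<Rightarrow> nat" where
  "link_idx j = snd (link_top_idx j)"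

lemma link_top_idx:
  assumes "Suc j < card V"
  shows "link_top j \<in> V" "link_idx j < length (child_list (link_top j))"
    "{vertex j, vertex (Suc j)} = {hd (link_path (link_top j) (link_idx j)), last (link_path (link_top j) (link_idx j))}"
proof -
  have "sublist [vertex j, vertex (Suc j)] (tour root)"
    using assms length_tour_root unfolding vertex_def by (simp add: sublist_pair_nth)
  then obtain y i where "y \<in> V" "i < length (child_list y)"
    "{vertex j, vertex (Suc j)} = {hd (link_path y i), last (link_path y i)}"
    using sublist_tour_link_path[OF root_in] descendants_root by blast
  then have "\<exists>p. case p of (y, i) \<Rightarrow> y \<in> V \<and> i < length (child_list y) \<and>
     {vertex j, vertex (Suc j)} = {hd (link_path y i), last (link_path y i)}"
    by blast
  from someI_ex[OF this] show "link_top j \<in> V" "link_idx j < length (child_list (link_top j))"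
    "{vertex j, vertex (Suc j)} = {hd (link_path (link_top j) (link_idx j)), last (link_path (link_top j) (link_idx j))}"
    unfolding link_top_def link_idx_def link_top_idx_def by (auto split: prod.splits)
qed

definition link :: "nat \<Rightarrow> 'a list" where
  "link j = (let P = link_path (link_top j) (link_idx j) in if hd P = vertex j then P else rev P)"

lemma link:
  assumes "Suc j < card V"
  shows "hd (link j) = vertex j" "last (link j) = vertex (Suc j)"
    "distinct (link j)" "2 \<le> length (link j)" "length (link j) \<le> 4"
    "sublist [a, b] (link j) \<Longrightarrow> E a b"
    "set (link j) = set (link_path (link_top j) (link_idx j))"
proof -
  define P where "P = link_path (link_top j) (link_idx j)"
  note P = link_path[OF link_top_idx(1,2)[OF assms], folded P_def]
  have ends: "{vertex j, vertex (Suc j)} = {hd P, last P}"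
    using link_top_idx(3)[OF assms] unfolding P_def .
  have "vertex j \<noteq> vertex (Suc j)"
    using vertex_inj[of j "Suc j"] assms by auto
  have "P \<noteq> []"
    using P(2) by auto
  have "hd (link j) = vertex j \<and> last (link j) = vertex (Suc j)"
  proof (cases "hd P = vertex j")
    case True
    then have "last P = vertex (Suc j)"
      using ends \<open>vertex j \<noteq> vertex (Suc j)\<close> by (metis doubleton_eq_iff)
    then show ?thesis
      using True unfolding link_def P_def[symmetric] Let_def by simp_all
  next
    case False
    then have "last P = vertex j" "hd P = vertex (Suc j)"
      using ends by (metis doubleton_eq_iff)+
    then show ?thesis
      using False \<open>P \<noteq> []\<close> unfolding link_def P_def[symmetric] Let_def
      by (simp add: hd_rev last_rev)
  qed
  then show "hd (link j) = vertex j" "last (link j) = vertex (Suc j)"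
    by simp_all
  show "distinct (link j)" "2 \<le> length (link j)" "length (link j) \<le> 4"
    "set (link j) = set (link_path (link_top j) (link_idx j))"
    using P(1-3) unfolding link_def P_def[symmetric] Let_def by simp_all
  show "sublist [a, b] (link j) \<Longrightarrow> E a b"
    using P(4)[of b a] P(4)[of a b] edge_sym
    unfolding link_def P_def[symmetric] Let_def by (cases "hd P = vertex j") (simp_all add: sublist_rev_right)
qed

lemma vertex_mem_link:
  assumes "Suc j < card V"
  shows "vertex j \<in> set (link j)" "vertex (Suc j) \<in> set (link j)"
proof -
  have "link j \<noteq> []"
    using link(4)[OF assms] by auto
  then show "vertex j \<in> set (link j)" "vertex (Suc j) \<in> set (link j)"
    using link(1,2)[OF assms] hd_in_set last_in_set by metis+
qed

lemma link_idx_less: "Suc j < card V \<Longrightarrow> link_idx j < max_degree V E"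
proof -
  assume j: "Suc j < card V"
  have "link_idx j < length (child_list (link_top j))"
    using link_top_idx(2)[OF j] .
  also have "\<dots> \<le> degree V E (link_top j)"
    by (rule length_child_list)
  also have "\<dots> \<le> max_degree V E"
    unfolding max_degree_def using finite_V link_top_idx(1)[OF j] by simp
  finally show ?thesis .
qed

text \<open>
  Links lie at most two levels below their top, so links of one class are vertex-disjoint: their
  tops are either equal, and then the child index differs, or at depths congruent mod 3.
\<close>

definition link_class :: "nat \<Rightarrow> nat" where
  "link_class j = depth (link_top j) mod 3 * max_degree V E + link_idx j"

lemma link_class_less: "Suc j < card V \<Longrightarrow> link_class j < 3 * max_degree V E"
proof -
  assume j: "Suc j < card V"
  have "depth (link_top j) mod 3 * max_degree V E \<le> 2 * max_degree V E"
    by (intro mult_right_mono) simp_all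
  then show ?thesis
    unfolding link_class_def using link_idx_less[OF j] by linarith
qed

lemma links_disjoint:
  assumes "Suc j < card V" "Suc j' < card V" "j \<noteq> j'" "link_class j = link_class j'"
  shows "set (link j) \<inter> set (link j') = {}"
proof -
  have decode: "link_class k mod max_degree V E = link_idx k \<and>
                link_class k div max_degree V E = depth (link_top k) mod 3" if "Suc k < card V" for k
    using link_idx_less[OF that] unfolding link_class_def by simp
  have same_idx: "link_idx j = link_idx j'"
    and same_depth: "depth (link_top j) mod 3 = depth (link_top j') mod 3"
    using decode[OF assms(1)] decode[OF assms(2)] assms(4) by simp_all
  have "link_top j \<noteq> link_top j'"
  proof
    assume "link_top j = link_top j'"
    then have "{vertex j, vertex (Suc j)} = {vertex j', vertex (Suc j')}"
      using link_top_idx(3)[OF assms(1)] link_top_idx(3)[OF assms(2)] same_idx by simp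
    then consider "vertex j = vertex j'" | "vertex j = vertex (Suc j')" "vertex (Suc j) = vertex j'"
      by (auto simp: doubleton_eq_iff)
    then show False
    proof cases
      case 1
      then show False using vertex_inj[of j j'] assms(1-3) by simp
    next
      case 2
      then have "j = Suc j'" "Suc j = j'"
        using vertex_inj[of j "Suc j'"] vertex_inj[of "Suc j" j'] assms(1,2) by simp_all
      then show False by simp
    qed
  qed
  then have "set (link_path (link_top j) (link_idx j)) \<inter> set (link_path (link_top j') (link_idx j')) = {}"
    using link_paths_disjoint[OF link_top_idx(1,2)[OF assms(1)] link_top_idx(1,2)[OF assms(2)]]
      same_depth by blast
  then show ?thesis
    using link(7)[OF assms(1)] link(7)[OF assms(2)] by simp
qed

definition active :: "nat \<Rightarrow> nat \<Rightarrow> nat set" where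
  "active t m = {j. Suc j < card V \<and> even (j + t) \<and> link_class j = m}"

definition phase_matching :: "nat \<Rightarrow> nat \<Rightarrow> nat \<Rightarrow> 'a set set" where
  "phase_matching t m k = (\<Union>j\<in>active t m. path_schedule (link j) k)"

lemma active_disjoint_family: "disjoint_family_on (\<lambda>j. set (link j)) (active t m)"
  unfolding disjoint_family_on_def active_def using links_disjoint by auto

lemma is_matching_phase_matching: "is_matching E (phase_matching t m k)"
  unfolding is_matching_def
proof (intro conjI ballI impI)
  fix e assume "e \<in> phase_matching t m k"
  then obtain j where j: "j \<in> active t m" "e \<in> path_schedule (link j) k"
    unfolding phase_matching_def by blast
  then obtain i where "Suc i < length (link j)" "e = {link j ! i, link j ! Suc i}"
    using path_schedule_edge by blast
  moreover have "Suc j < card V"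
    using j(1) unfolding active_def by simp
  ultimately show "\<exists>u v. E u v \<and> e = {u, v}"
    using link(6) sublist_pair_nth by blast
next
  have "pairwise disjnt (phase_matching t m k)"
    unfolding phase_matching_def
    by (rule pairwise_disjnt_UN_disjoint_family[OF _ active_disjoint_family])
      (intro conjI path_schedule_pairwise_disjnt path_schedule_subset)
  then show "e1 \<inter> e2 = {}" if "e1 \<in> phase_matching t m k" "e2 \<in> phase_matching t m k" "e1 \<noteq> e2"
    for e1 e2
    using that unfolding pairwise_def disjnt_def by blast
qed

lemma pos_phase_matching_link:
  shows "j \<in> active t m \<Longrightarrow> w \<in> set (link j) \<Longrightarrow> pos (phase_matching t m) s w = pos (path_schedule (link j)) s w"
    and "w \<notin> (\<Union>j\<in>active t m. set (link j)) \<Longrightarrow> pos (phase_matching t m) s w = w"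
proof -
  have matching: "phase_matching t m = (\<lambda>k. \<Union>j\<in>active t m. path_schedule (link j) k)"
    by (rule ext) (simp add: phase_matching_def)
  note parallel = pos_UN_disjoint_family[where N = "\<lambda>j. path_schedule (link j)",
      OF conjI[OF path_schedule_pairwise_disjnt path_schedule_subset] active_disjoint_family]
  show "j \<in> active t m \<Longrightarrow> w \<in> set (link j) \<Longrightarrow>
      pos (phase_matching t m) s w = pos (path_schedule (link j)) s w"
    "w \<notin> (\<Union>j\<in>active t m. set (link j)) \<Longrightarrow> pos (phase_matching t m) s w = w"
    unfolding matching using parallel by simp_all
qed

lemma pos_phase_matching_active:
  assumes "j \<in> active t m" "w \<in> set (link j)"
  shows "pos (phase_matching t m) 5 w =
           (if w = vertex j then vertex (Suc j) else if w = vertex (Suc j) then vertex j else w)"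
proof -
  have j: "Suc j < card V"
    using assms(1) unfolding active_def by simp
  show ?thesis
    unfolding pos_phase_matching_link(1)[OF assms] path_schedule_swaps_ends[OF link(3-5)[OF j]]
    using link(1,2)[OF j] by simp
qed

lemma pos_phase_matching_idle:
  assumes "q < card V" "q \<notin> active t m" "q = 0 \<or> q - 1 \<notin> active t m"
  shows "pos (phase_matching t m) 5 (vertex q) = vertex q"
proof (cases "\<exists>j\<in>active t m. vertex q \<in> set (link j)")
  case True
  then obtain j where j: "j \<in> active t m" "vertex q \<in> set (link j)"
    by blast
  then have "j \<noteq> q" "Suc j \<noteq> q" "Suc j < card V"
    using assms(2,3) unfolding active_def by auto
  then have "vertex q \<noteq> vertex j" "vertex q \<noteq> vertex (Suc j)"
    using vertex_inj assms(1) by (metis Suc_lessD)+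
  then show ?thesis
    using pos_phase_matching_active[OF j] by simp
next
  case False
  then show ?thesis
    using pos_phase_matching_link(2) by blast
qed

lemma pos_phase_matching:
  assumes "q < card V"
  shows "pos (phase_matching t m) 5 (vertex q) = vertex (oets_phase (card V) t link_class m q)"
proof -
  consider (left) "q \<in> active t m" | (right) "q \<noteq> 0" "q - 1 \<in> active t m"
    | (idle) "q \<notin> active t m" "q = 0 \<or> q - 1 \<notin> active t m"
    by auto
  then show ?thesis
  proof cases
    case left
    then have "Suc q < card V"
      unfolding active_def by simp
    then have "pos (phase_matching t m) 5 (vertex q) = vertex (Suc q)"
      using pos_phase_matching_active[OF left vertex_mem_link(1)] by simp
    moreover have "oets_phase (card V) t link_class m q = Suc q"
      using left unfolding oets_phase_def active_def by simp
    ultimately show ?thesis by simp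
  next
    case right
    define j where "j = q - 1"
    have j: "Suc j = q" "Suc j < card V" "j \<in> active t m"
      using right assms unfolding j_def by auto
    then have "vertex j \<noteq> vertex q"
      using vertex_inj[of j q] by auto
    then have "pos (phase_matching t m) 5 (vertex q) = vertex j"
      using pos_phase_matching_active[OF j(3) vertex_mem_link(2)[OF j(2)]] j(1) by simp
    moreover have "oets_phase (card V) t link_class m q = j"
      using j unfolding oets_phase_def active_def by auto
    ultimately show ?thesis by simp
  next
    case idle
    have "oets_phase (card V) t link_class m q = q"
      using idle assms unfolding oets_phase_def active_def by (auto simp: even_add)
    then show ?thesis
      using pos_phase_matching_idle[OF assms idle] by simp
  qed
qed

text \<open>
  Round \<open>t\<close> of the sorting network occupies the \<open>round_length\<close> matchings from time
  \<open>t * round_length\<close> on: \<open>3\<Delta>\<close> phases of 5 matchings, one phase per link class.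
\<close>

definition round_length :: nat where
  "round_length = 15 * max_degree V E"

definition strategy :: "nat \<Rightarrow> 'a set set" where
  "strategy T = phase_matching (T div round_length) (T mod round_length div 5) (T mod round_length mod 5)"

lemma is_matching_strategy: "is_matching E (strategy T)"
  unfolding strategy_def by (rule is_matching_phase_matching)

lemma pos_strategy_in_phase:
  assumes "m < 3 * max_degree V E" "s \<le> 5"
  shows "pos (\<lambda>i. strategy (t * round_length + 5 * m + i)) s = pos (phase_matching t m) s"
proof (rule pos_cong)
  fix k assume "k < s"
  then have "5 * m + k < round_length"
    using assms unfolding round_length_def by linarith
  then show "strategy (t * round_length + 5 * m + k) = phase_matching t m k"
    using \<open>k < s\<close> assms(2) unfolding strategy_def by (simp add: add.assoc)
qed

lemma pos_strategy_phases:
  assumes "m \<le> 3 * max_degree V E" "q < card V"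
  shows "pos (\<lambda>i. strategy (t * round_length + i)) (5 * m) (vertex q) =
         vertex (oets_phases (card V) t link_class m q)"
  using assms(1)
proof (induction m)
  case 0
  then show ?case by (simp add: oets_phases_0)
next
  case (Suc m)
  have "pos (\<lambda>i. strategy (t * round_length + i)) (5 * m + 5) =
        pos (\<lambda>i. strategy (t * round_length + 5 * m + i)) 5 \<circ>
        pos (\<lambda>i. strategy (t * round_length + i)) (5 * m)"
    by (simp add: pos_add add.assoc)
  also have "\<dots> = pos (phase_matching t m) 5 \<circ> pos (\<lambda>i. strategy (t * round_length + i)) (5 * m)"
    using Suc.prems pos_strategy_in_phase by simp
  finally have "pos (\<lambda>i. strategy (t * round_length + i)) (5 * m + 5) (vertex q) =
      vertex (oets_phases (card V) t link_class (Suc m) q)"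
    using Suc pos_phase_matching oets_phases_less assms(2) by (simp add: oets_phases_Suc)
  then show ?case
    by (simp add: add.commute)
qed

lemma pos_strategy_round:
  assumes "q < card V"
  shows "pos (\<lambda>i. strategy (t * round_length + i)) round_length (vertex q) =
         vertex (oets_step (card V) t q)"
  using pos_strategy_phases[OF order_refl assms, of t] oets_phases_complete[OF link_class_less assms]
  unfolding round_length_def by simp

lemma pos_strategy:
  assumes "p < card V"
  shows "pos strategy (t * round_length) (vertex p) = vertex (oets_pos (card V) p t)"
proof (induction t)
  case 0
  then show ?case using assms by (simp add: oets_pos_0)
next
  case (Suc t)
  have "pos strategy (t * round_length + round_length) =
        pos (\<lambda>i. strategy (t * round_length + i)) round_length \<circ> pos strategy (t * round_length)"
    by (rule pos_add)
  then show ?case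
    using Suc pos_strategy_round oets_pos_less[OF assms] by (simp add: oets_pos_Suc[OF assms] add.commute)
qed

lemma strategy_meets:
  assumes "Suc q < card V" "even (q + t)"
  shows "\<exists>s\<le>round_length. E (pos (\<lambda>i. strategy (t * round_length + i)) s (vertex q))
                                 (pos (\<lambda>i. strategy (t * round_length + i)) s (vertex (Suc q)))"
proof -
  define m where "m = link_class q"
  have m: "m < 3 * max_degree V E"
    using link_class_less[OF assms(1)] unfolding m_def .
  have active: "q \<in> active t m"
    using assms unfolding active_def m_def by simp
  obtain s i where s: "s < 5" "Suc i < length (link q)"
    "pos (path_schedule (link q)) s (hd (link q)) = link q ! i"
    "pos (path_schedule (link q)) s (last (link q)) = link q ! Suc i"
    using path_schedule_meets[OF link(3-5)[OF assms(1)]] by blast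
  have in_link: "pos (\<lambda>i. strategy (t * round_length + i)) (5 * m + s) w = pos (path_schedule (link q)) s w"
    if "w \<in> {vertex q, vertex (Suc q)}" for w
  proof -
    have "oets_phases (card V) t link_class m p = p" if "p \<in> {q, Suc q}" for p
      using that assms unfolding oets_phases_def m_def by auto
    then have "pos (\<lambda>i. strategy (t * round_length + i)) (5 * m) w = w"
      using pos_strategy_phases[of m] m assms(1) \<open>w \<in> {vertex q, vertex (Suc q)}\<close> by auto
    moreover have "w \<in> set (link q)"
      using vertex_mem_link[OF assms(1)] that by auto
    ultimately show ?thesis
      using pos_add[of "\<lambda>i. strategy (t * round_length + i)" "5 * m" s]
        pos_strategy_in_phase[OF m, of s t] s(1) pos_phase_matching_link(1)[OF active]
      by (simp add: add.assoc)
  qed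
  moreover have "E (link q ! i) (link q ! Suc i)"
    using link(6)[OF assms(1)] sublist_pair_nth[OF s(2)] .
  moreover have "5 * m + s \<le> round_length"
    using m s(1) unfolding round_length_def by linarith
  ultimately show ?thesis
    using s(3,4) link(1,2)[OF assms(1)] in_link[of "vertex q"] in_link[of "vertex (Suc q)"]
    by (intro exI[of _ "5 * m + s"]) simp
qed

lemma acquainted_strategy:
  assumes "p < q" "q < card V"
  shows "acquainted E strategy (card V * round_length) (vertex p) (vertex q)"
proof -
  obtain t where t: "t < card V" "oets_pos (card V) q t = Suc (oets_pos (card V) p t)"
    "even (oets_pos (card V) p t + t)"
    using oets_meet[OF assms] by blast
  define j where "j = oets_pos (card V) p t"
  have "Suc j < card V"
    using oets_pos_less[OF assms(2), of t] t(2) unfolding j_def by simp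
  then obtain s where s: "s \<le> round_length"
    "E (pos (\<lambda>i. strategy (t * round_length + i)) s (vertex j))
       (pos (\<lambda>i. strategy (t * round_length + i)) s (vertex (Suc j)))"
    using strategy_meets t(3) unfolding j_def by blast
  have "pos strategy (t * round_length) (vertex p) = vertex j"
    "pos strategy (t * round_length) (vertex q) = vertex (Suc j)"
    using pos_strategy assms t(2) unfolding j_def by auto
  then have "E (pos strategy (t * round_length + s) (vertex p))
               (pos strategy (t * round_length + s) (vertex q))"
    using s(2) by (simp add: pos_add)
  moreover have "t * round_length + s \<le> Suc t * round_length"
    using s(1) by simp
  moreover have "Suc t * round_length \<le> card V * round_length"
    using t(1) by (intro mult_right_mono) simp_all
  ultimately show ?thesis
    unfolding acquainted_def by (meson order_trans)
qed

lemma is_strategy_strategy: "is_strategy V E strategy (card V * round_length)"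
  unfolding is_strategy_def
proof (intro conjI allI impI ballI)
  fix i show "is_matching E (strategy i)"
    by (rule is_matching_strategy)
next
  fix a b assume "a \<in> V" "b \<in> V" "a \<noteq> b"
  then obtain p q where pq: "p < card V" "q < card V" "p \<noteq> q" and "vertex p = a" "vertex q = b"
    using vertex_surj by metis
  then consider "acquainted E strategy (card V * round_length) a b"
    | "acquainted E strategy (card V * round_length) b a"
    using acquainted_strategy[of p q] acquainted_strategy[of q p] by (metis nat_neq_iff)
  then show "acquainted E strategy (card V * round_length) a b"
    by cases (auto simp: acquainted_def intro: edge_sym)
qed

end

theorem theorem2p1:
  fixes V :: "'a set" and E :: "'a \<Rightarrow> 'a \<Rightarrow> bool"
  assumes "fin_graph V E" and "connected_graph V E"
  shows "acquaintance_time V E \<le> 20 * max_degree V E * card V"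
proof -
  obtain r where "r \<in> V"
    using assms(1) unfolding fin_graph_def by blast
  then interpret rooted_graph V E r
    using assms by unfold_locales
  have "acquaintance_time V E \<le> card V * round_length"
    unfolding acquaintance_time_def using is_strategy_strategy by (intro Least_le) blast
  also have "\<dots> \<le> 20 * max_degree V E * card V"
    unfolding round_length_def by simp
  finally show ?thesis .
qed

end
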